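(* Let $\Gamma\subset\mathbf{Z}^n$ be an almost periodic pattern. Then the mean of $\rho_\Gamma$ equals $D(\Gamma)$: for every $\varepsilon>0$ there exists $R_0>0$ such that for every $R\ge R_0$ and every $x\in\mathbf{R}^n$, $\left|D(\Gamma)-\frac{1}{\operatorname{Card}[B(x,R)]}\sum_{v\in[B(x,R)]}\rho_\Gamma(v)\right|<\varepsilon.$
   Context: Balls are for the sup norm: $B(x,R)=\{y:\max_i|x_i-y_i|<R\}$, $B_R=B(0,R)$, $[B]=B\cap\mathbf{Z}^n$. Relatively dense: there is $R_0>0$ such that every ball of radius at least $R_0$ meets the set; uniformly discrete: there is $r>0$ such that every ball of radius at most $r$ contains at most one point; Delone: both. $D_R^+(\Gamma)=\sup_{x\in\mathbf{R}^n}\frac{\operatorname{Card}(B(x,R)\cap\Gamma)}{\operatorname{Card}(B(x,R)\cap\mathbf{Z}^n)}$. A Delone set $\Gamma\subset\mathbf{Z}^n$ is an almost periodic pattern if for every $\varepsilon>0$ there exist $R_\varepsilon>0$ and a relatively dense set $\mathcal N_\varepsilon$ with $D_R^+((\Gamma+v)\Delta\Gamma)<\varepsilon$ for all $R\ge R_\varepsilon$, $v\in\mathcal N_\varepsilon$. The density of $A\subset\mathbf{Z}^n$ is $D(A)=\lim_{R\to\infty}\operatorname{Card}(A\cap[B_R])/\operatorname{Card}[B_R]$ (the paper uses that these densities exist for the sets considered). For $v\in\mathbf{Z}^n$, $\rho_\Gamma(v)=\frac{D(\Gamma\cap(\Gamma-v))}{D(\Gamma)}$. *)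

theory Defs
  imports "HOL-Analysis.Analysis"
begin

text \<open>Points of Z^n are vectors of type int ^ 'n, points of R^n are real ^ 'n.
  The dimension n = CARD('n) is an arbitrary fixed finite type.\<close>

definition int_to_real_vec :: "int ^ 'n \<Rightarrow> real ^ 'n" where
  "int_to_real_vec z = (\<chi> i. of_int (z $ i))"

definition supball :: "real ^ 'n \<Rightarrow> real \<Rightarrow> (real ^ 'n) set" where
  "supball x R = {y. \<forall>i. \<bar>x $ i - y $ i\<bar> < R}"

definition zball :: "real ^ 'n \<Rightarrow> real \<Rightarrow> (int ^ 'n) set" where
  "zball x R = {z. int_to_real_vec z \<in> supball x R}"

definition relatively_dense :: "(int ^ 'n) set \<Rightarrow> bool" where
  "relatively_dense A \<longleftrightarrow>
     (\<exists>R0>0. \<forall>x :: real ^ 'n. \<forall>R\<ge>R0. zball x R \<inter> A \<noteq> {})"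

definition uniformly_discrete :: "(int ^ 'n) set \<Rightarrow> bool" where
  "uniformly_discrete A \<longleftrightarrow>
     (\<exists>r>0. \<forall>x :: real ^ 'n. \<forall>R\<le>r. \<forall>y\<in>zball x R \<inter> A. \<forall>z\<in>zball x R \<inter> A. y = z)"

definition delone :: "(int ^ 'n) set \<Rightarrow> bool" where
  "delone A \<longleftrightarrow> relatively_dense A \<and> uniformly_discrete A"

definition Dplus :: "real \<Rightarrow> (int ^ 'n) set \<Rightarrow> real" where
  "Dplus R A = (SUP x :: real ^ 'n. real (card (zball x R \<inter> A)) / real (card (zball x R)))"

definition translate :: "(int ^ 'n) set \<Rightarrow> int ^ 'n \<Rightarrow> (int ^ 'n) set" where
  "translate A v = (\<lambda>z. z + v) ` A"

definition almost_periodic_pattern :: "(int ^ 'n) set \<Rightarrow> bool" where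
  "almost_periodic_pattern \<Gamma> \<longleftrightarrow> delone \<Gamma> \<and>
     (\<forall>\<epsilon>>0. \<exists>R\<epsilon>>0. \<exists>N. relatively_dense N \<and>
        (\<forall>R\<ge>R\<epsilon>. \<forall>v\<in>N.
           Dplus R ((translate \<Gamma> v - \<Gamma>) \<union> (\<Gamma> - translate \<Gamma> v)) < \<epsilon>))"

definition density :: "(int ^ 'n) set \<Rightarrow> real" where
  "density A = Lim at_top (\<lambda>R::real. real (card (A \<inter> zball 0 R)) / real (card (zball (0 :: real ^ 'n) R)))"

definition rho :: "(int ^ 'n) set \<Rightarrow> int ^ 'n \<Rightarrow> real" where
  "rho \<Gamma> v = density (\<Gamma> \<inter> translate \<Gamma> (- v)) / density \<Gamma>"

end

theory Submission
  imports Defs "HOL-Real_Asymp.Real_Asymp"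
begin

(*
  The local frequency freq \<Gamma> x R = Card (\<Gamma> \<inter> [B(x,R)]) / Card [B(x,R)] tends to the
  density D(\<Gamma>) as R grows, uniformly in the centre x.  Translating the centre by an almost
  period changes the frequency by little; by relative density every centre is reached this
  way up to a bounded shift, which changes the frequency only by O(1/R).  So the
  oscillation of the frequency over all centres tends to 0, and counting \<Gamma> \<inter> [B_T] through
  the R-balls centred at the lattice points of [B_T] shows that freq \<Gamma> 0 T is Cauchy.  The
  sets \<Gamma> \<inter> (\<Gamma> - v) have the same almost periods, so their densities exist too, and
  double counting gives

    \<Sum>v \<in> [B(x,R)]. D(\<Gamma> \<inter> (\<Gamma> - v))
      = lim_S (1 / Card [B_S]) \<Sum>y \<in> \<Gamma> \<inter> [B_S]. Card (\<Gamma> \<inter> [B(x + y, R)]).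

  Each summand on the right is Card [B(x,R)] (D(\<Gamma>) \<plusminus> \<epsilon>), hence the mean of
  rho \<Gamma> over [B(x,R)] is D(\<Gamma>) \<plusminus> \<epsilon>.
*)

section \<open>Lattice balls\<close>

abbreviation of_int_vec :: "int ^ 'n \<Rightarrow> real ^ 'n" where
  "of_int_vec \<equiv> int_to_real_vec"

lemma int_to_real_vec_nth [simp]: "int_to_real_vec z $ i = of_int (z $ i)"
  by (simp add: int_to_real_vec_def)

lemma mem_zball: "z \<in> zball x R \<longleftrightarrow> (\<forall>i. \<bar>x $ i - of_int (z $ i)\<bar> < R)"
  by (simp add: zball_def supball_def)

lemma zball_eq_box: "zball x R = {z. \<forall>i. z $ i \<in> {\<lfloor>x $ i - R\<rfloor><..<\<lceil>x $ i + R\<rceil>}}"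
proof -
  have "\<bar>x $ i - of_int k\<bar> < R \<longleftrightarrow> k \<in> {\<lfloor>x $ i - R\<rfloor><..<\<lceil>x $ i + R\<rceil>}" for k i
    by (simp add: floor_less_iff less_ceiling_iff abs_less_iff) linarith
  then show ?thesis by (simp add: set_eq_iff mem_zball)
qed

lemma bij_betw_vec_nth_box:
  "bij_betw vec_nth {z :: 'a ^ 'n. \<forall>i. z $ i \<in> S i} (PiE UNIV S)"
proof (rule bij_betw_imageI)
  show "inj_on vec_nth {z :: 'a ^ 'n. \<forall>i. z $ i \<in> S i}"
    by (auto simp: inj_on_def vec_eq_iff)
  show "vec_nth ` {z :: 'a ^ 'n. \<forall>i. z $ i \<in> S i} = PiE UNIV S"
  proof (auto simp: PiE_def Pi_def)
    fix f assume "\<forall>i. f i \<in> S i"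
    then show "f \<in> vec_nth ` {z. \<forall>i. z $ i \<in> S i}"
      by (intro image_eqI[where x="vec_lambda f"]) auto
  qed
qed

lemma finite_zball [simp]: "finite (zball x R)"
  unfolding zball_eq_box
  by (rule bij_betw_finite[OF bij_betw_vec_nth_box, THEN iffD2]) (simp add: finite_PiE)

lemma card_zball: "card (zball x R) = (\<Prod>i\<in>UNIV. nat (\<lceil>x $ i + R\<rceil> - (\<lfloor>x $ i - R\<rfloor> + 1)))"
  unfolding zball_eq_box bij_betw_same_card[OF bij_betw_vec_nth_box] by (simp add: card_PiE)

lemma card_int_interval_bounds:
  fixes x R :: real
  assumes "R \<ge> 1/2"
  shows "2*R - 1 \<le> real (nat (\<lceil>x + R\<rceil> - (\<lfloor>x - R\<rfloor> + 1)))"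
    and "real (nat (\<lceil>x + R\<rceil> - (\<lfloor>x - R\<rfloor> + 1))) \<le> 2*R + 1"
proof -
  have "x + R \<le> \<lceil>x + R\<rceil>" "\<lceil>x + R\<rceil> < x + R + 1" "\<lfloor>x - R\<rfloor> \<le> x - R" "x - R - 1 < \<lfloor>x - R\<rfloor>"
    by linarith+
  moreover from this have "real (nat (\<lceil>x + R\<rceil> - (\<lfloor>x - R\<rfloor> + 1))) = \<lceil>x + R\<rceil> - \<lfloor>x - R\<rfloor> - 1"
    using assms by (subst of_nat_nat) linarith+
  ultimately show "2*R - 1 \<le> real (nat (\<lceil>x + R\<rceil> - (\<lfloor>x - R\<rfloor> + 1)))"
    and "real (nat (\<lceil>x + R\<rceil> - (\<lfloor>x - R\<rfloor> + 1))) \<le> 2*R + 1"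
    by linarith+
qed

lemma card_zball_bounds:
  fixes x :: "real ^ 'n"
  assumes "R \<ge> 1/2"
  shows "(2*R - 1) ^ CARD('n) \<le> real (card (zball x R))"
    and "real (card (zball x R)) \<le> (2*R + 1) ^ CARD('n)"
proof -
  have card: "real (card (zball x R)) = (\<Prod>i\<in>UNIV. real (nat (\<lceil>x $ i + R\<rceil> - (\<lfloor>x $ i - R\<rfloor> + 1))))"
    by (simp add: card_zball)
  have "(2*R - 1) ^ CARD('n) = (\<Prod>i\<in>(UNIV::'n set). 2*R - 1)" by simp
  also have "\<dots> \<le> real (card (zball x R))"
    unfolding card by (rule prod_mono) (use assms card_int_interval_bounds in auto)
  finally show "(2*R - 1) ^ CARD('n) \<le> real (card (zball x R))" .
  have "real (card (zball x R)) \<le> (\<Prod>i\<in>(UNIV::'n set). 2*R + 1)"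
    unfolding card by (rule prod_mono) (use assms card_int_interval_bounds in auto)
  then show "real (card (zball x R)) \<le> (2*R + 1) ^ CARD('n)" by simp
qed

lemma card_zball_pos: "R > 1/2 \<Longrightarrow> 0 < card (zball (x :: real ^ 'n) R)"
  using card_zball_bounds(1)[of R x] zero_less_power[of "2*R - 1" "CARD('n)"] by linarith

lemma zball_translate: "(\<lambda>z. z + v) ` zball x R = zball (x + of_int_vec v) R"
proof -
  have "z \<in> zball (x + of_int_vec v) R \<longleftrightarrow> z - v \<in> zball x R" for z
    by (simp add: mem_zball algebra_simps)
  moreover have "z \<in> (\<lambda>z. z + v) ` zball x R \<longleftrightarrow> z - v \<in> zball x R" for z
    by (auto intro: image_eqI[where x="z - v"])
  ultimately show ?thesis by blast
qed

lemma card_zball_translate: "card (zball (x + of_int_vec v) R) = card (zball x R)"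
proof -
  have "inj_on (\<lambda>z. z + v) (zball x R)" by (simp add: inj_on_def)
  then show ?thesis by (simp add: zball_translate[symmetric] card_image)
qed

lemma zball_subset_zball:
  assumes "\<forall>i. \<bar>x $ i - y $ i\<bar> \<le> a"
  shows "zball y (R - a) \<subseteq> zball x R"
proof
  fix z assume "z \<in> zball y (R - a)"
  then have z: "\<bar>y $ i - of_int (z $ i)\<bar> < R - a" for i
    by (simp add: mem_zball)
  have "\<bar>x $ i - of_int (z $ i)\<bar> < R" for i
    using assms[rule_format, of i] z[of i] unfolding abs_le_iff abs_less_iff by linarith
  then show "z \<in> zball x R" by (simp add: mem_zball)
qed

lemma zball_mono: "R \<le> R' \<Longrightarrow> zball x R \<subseteq> zball x R'"
  by (auto simp: mem_zball) (meson less_le_trans)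

lemma mem_zball_commute: "a \<in> zball (of_int_vec y) R \<longleftrightarrow> y \<in> zball (of_int_vec a) R"
  by (simp add: mem_zball abs_minus_commute)

lemma mem_translate: "z \<in> translate A v \<longleftrightarrow> z - v \<in> A"
  unfolding translate_def by (auto intro: image_eqI[where x="z - v"])

lemma card_zball_ratio_bounds:
  fixes x y :: "real ^ 'n"
  assumes "r > 1/2" "s \<ge> 1/2"
  shows "((2 * s - 1) / (2 * r + 1)) ^ CARD('n) \<le> real (card (zball x s)) / real (card (zball y r))"
    and "real (card (zball x s)) / real (card (zball y r)) \<le> ((2 * s + 1) / (2 * r - 1)) ^ CARD('n)"
proof -
  have "0 < (2 * r - 1) ^ CARD('n)" "0 \<le> (2 * s - 1) ^ CARD('n)"
    using assms by simp_all
  then show "((2 * s - 1) / (2 * r + 1)) ^ CARD('n)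
      \<le> real (card (zball x s)) / real (card (zball y r))"
    and "real (card (zball x s)) / real (card (zball y r)) \<le> ((2 * s + 1) / (2 * r - 1)) ^ CARD('n)"
    unfolding power_divide
    using assms card_zball_bounds[of s x] card_zball_bounds[of r y] card_zball_pos[of r y]
    by (auto intro!: frac_le)
qed

lemma tendsto_card_zball_ratio:
  fixes x :: "real ^ 'n"
  shows "((\<lambda>T. real (card (zball x (T + c))) / real (card (zball x T))) \<longlongrightarrow> 1) at_top"
proof (rule tendsto_sandwich)
  have ev: "\<forall>\<^sub>F T in at_top. T \<ge> max 1 (1 - c)"
    by (rule eventually_ge_at_top)
  show "\<forall>\<^sub>F T in at_top. ((2*(T + c) - 1) / (2*T + 1)) ^ CARD('n)
                 \<le> real (card (zball x (T + c))) / real (card (zball x T))"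
    using ev by (rule eventually_mono) (rule card_zball_ratio_bounds; simp)
  show "\<forall>\<^sub>F T in at_top. real (card (zball x (T + c))) / real (card (zball x T))
                 \<le> ((2*(T + c) + 1) / (2*T - 1)) ^ CARD('n)"
    using ev by (rule eventually_mono) (rule card_zball_ratio_bounds; simp)
  have "((\<lambda>T. (2*(T + c) - 1) / (2*T + 1)) \<longlongrightarrow> 1) at_top"
    and "((\<lambda>T. (2*(T + c) + 1) / (2*T - 1)) \<longlongrightarrow> 1) at_top"
    by real_asymp+
  from this[THEN tendsto_power, of "CARD('n)"]
  show "((\<lambda>T. ((2*(T + c) - 1) / (2*T + 1)) ^ CARD('n)) \<longlongrightarrow> 1) at_top"
    and "((\<lambda>T. ((2*(T + c) + 1) / (2*T - 1)) ^ CARD('n)) \<longlongrightarrow> 1) at_top"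
    by simp_all
qed

section \<open>Frequencies\<close>

definition freq :: "(int ^ 'n) set \<Rightarrow> real ^ 'n \<Rightarrow> real \<Rightarrow> real" where
  "freq A x R = real (card (A \<inter> zball x R)) / real (card (zball x R))"

lemma density_eq_Lim_freq: "density A = Lim at_top (freq A 0)"
  by (simp add: density_def freq_def[abs_def])

lemma card_Int_zball_eq_freq: "real (card (A \<inter> zball x R)) = freq A x R * card (zball x R)"
  by (cases "zball x R = {}") (auto simp: freq_def)

lemma freq_nonneg: "0 \<le> freq A x R"
  by (simp add: freq_def)

lemma freq_mono: "A \<subseteq> B \<Longrightarrow> freq A x R \<le> freq B x R"
  unfolding freq_def by (intro divide_right_mono) (auto intro: card_mono)

lemma freq_le_1: "freq A x R \<le> 1"
  using freq_mono[of A UNIV x R] by (cases "zball x R = {}") (auto simp: freq_def)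

lemma freq_Un_le: "freq (A \<union> B) x R \<le> freq A x R + freq B x R"
proof -
  have "card ((A \<union> B) \<inter> zball x R) \<le> card (A \<inter> zball x R) + card (B \<inter> zball x R)"
    by (metis Int_Un_distrib2 card_Un_le)
  then show ?thesis
    unfolding freq_def add_divide_distrib[symmetric] by (intro divide_right_mono) linarith+
qed

lemma freq_diff_le_freq_sym_diff: "\<bar>freq A x R - freq B x R\<bar> \<le> freq (sym_diff A B) x R"
proof -
  have "freq A x R \<le> freq (B \<union> sym_diff A B) x R" "freq B x R \<le> freq (A \<union> sym_diff A B) x R"
    by (auto intro: freq_mono)
  then show ?thesis
    using freq_Un_le[of B "sym_diff A B" x R] freq_Un_le[of A "sym_diff A B" x R] by linarith
qed

lemma freq_translate: "freq (translate A v) (x + of_int_vec v) R = freq A x R"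
proof -
  have "translate A v \<inter> zball (x + of_int_vec v) R = (\<lambda>z. z + v) ` (A \<inter> zball x R)"
    unfolding zball_translate[symmetric] translate_def by auto
  then have "card (translate A v \<inter> zball (x + of_int_vec v) R) = card (A \<inter> zball x R)"
    by (simp add: card_image)
  then show ?thesis by (simp add: freq_def card_zball_translate)
qed

lemma freq_le_Dplus: "freq A x R \<le> Dplus R A"
proof -
  have Dplus: "Dplus R A = (SUP x. freq A x R)"
    by (simp add: Dplus_def freq_def inf.commute)
  have "bdd_above (range (\<lambda>x. freq A x R))"
    using freq_le_1 by (intro bdd_aboveI2)
  then show ?thesis
    unfolding Dplus by (rule cSUP_upper[OF UNIV_I])
qed

lemma card_Int_ratio_subset_le:
  assumes "W \<subseteq> U" "finite U" "W \<noteq> {}"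
  shows "\<bar>real (card (A \<inter> U)) / real (card U) - real (card (A \<inter> W)) / real (card W)\<bar>
           \<le> real (card U) / real (card W) - 1"
proof -
  define k kU u w where "k = real (card (A \<inter> W))" and "kU = real (card (A \<inter> U))"
    and "u = real (card U)" and "w = real (card W)"
  have "finite W" using assms finite_subset by blast
  then have "0 < w" "w \<le> u" "0 \<le> k" "k \<le> w"
    using assms by (auto simp: w_def u_def k_def card_gt_0_iff intro: card_mono)
  have "k \<le> kU"
    unfolding k_def kU_def using assms by (intro of_nat_mono card_mono) auto
  have "card (A \<inter> U) \<le> card ((A \<inter> W) \<union> (U - W))"
    using assms \<open>finite W\<close> by (intro card_mono) auto
  also have "\<dots> \<le> card (A \<inter> W) + (card U - card W)"
    using card_Un_le card_Diff_subset[OF \<open>finite W\<close> assms(1)] by metis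
  finally have "kU \<le> k + u - w"
    unfolding k_def kU_def u_def w_def using card_mono[OF assms(2,1)] by linarith
  have "kU / u - k / w \<le> (u - w) / u"
  proof -
    have "kU / u - k / w \<le> (k + u - w) / u - k / u"
      using \<open>kU \<le> k + u - w\<close> \<open>0 < w\<close> \<open>w \<le> u\<close> \<open>0 \<le> k\<close>
      by (intro diff_mono divide_right_mono divide_left_mono) auto
    also have "\<dots> = (u - w) / u"
      by (simp add: diff_divide_distrib[symmetric])
    finally show ?thesis .
  qed
  moreover have "k / w - kU / u \<le> (u - w) / u"
  proof -
    have "k / w - kU / u \<le> k / w - k / u"
      using \<open>k \<le> kU\<close> \<open>0 < w\<close> \<open>w \<le> u\<close> by (intro diff_mono divide_right_mono) auto
    also have "\<dots> = (k / w) * ((u - w) / u)"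
      using \<open>0 < w\<close> \<open>w \<le> u\<close> by (simp add: field_simps)
    also have "\<dots> \<le> (u - w) / u"
      using \<open>k \<le> w\<close> \<open>0 < w\<close> \<open>w \<le> u\<close> \<open>0 \<le> k\<close> by (intro mult_left_le_one_le) auto
    finally show ?thesis .
  qed
  moreover have "(u - w) / u \<le> (u - w) / w"
    using \<open>0 < w\<close> \<open>w \<le> u\<close> by (intro divide_left_mono) auto
  moreover have "(u - w) / w = u / w - 1"
    using \<open>0 < w\<close> by (simp add: diff_divide_distrib)
  ultimately show ?thesis
    unfolding k_def kU_def u_def w_def by linarith
qed

lemma freq_near_centers:
  fixes A :: "(int ^ 'n) set"
  assumes "\<epsilon> > 0"
  shows "\<exists>R0. \<forall>R\<ge>R0. \<forall>x y :: real ^ 'n.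
           (\<forall>i. \<bar>x $ i - y $ i\<bar> \<le> a) \<longrightarrow> \<bar>freq A x R - freq A y R\<bar> < \<epsilon>"
proof -
  have "((\<lambda>R. (2*R + 1) / (2*(R - a) - 1)) \<longlongrightarrow> 1) at_top"
    by real_asymp
  then have "((\<lambda>R. ((2*R + 1) / (2*(R - a) - 1)) ^ CARD('n)) \<longlongrightarrow> 1) at_top"
    using tendsto_power by fastforce
  then have "\<forall>\<^sub>F R in at_top. ((2*R + 1) / (2*(R - a) - 1)) ^ CARD('n) < 1 + \<epsilon>/2"
    by (rule order_tendstoD) (use assms in simp)
  moreover have "\<forall>\<^sub>F R in at_top. R > \<bar>a\<bar> + 1/2"
    by (rule eventually_gt_at_top)
  ultimately have "\<forall>\<^sub>F R in at_top.
      ((2*R + 1) / (2*(R - a) - 1)) ^ CARD('n) < 1 + \<epsilon>/2 \<and> R > \<bar>a\<bar> + 1/2"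
    by (rule eventually_conj)
  then obtain R0 where R0: "\<And>R. R \<ge> R0 \<Longrightarrow>
      ((2*R + 1) / (2*(R - a) - 1)) ^ CARD('n) < 1 + \<epsilon>/2 \<and> R > \<bar>a\<bar> + 1/2"
    unfolding eventually_at_top_linorder by blast
  have "\<bar>freq A x R - freq A y R\<bar> < \<epsilon>"
    if "R \<ge> R0" and near: "\<forall>i. \<bar>x $ i - y $ i\<bar> \<le> a" for R and x y :: "real ^ 'n"
  proof -
    \<comment> \<open>\<open>W\<close> lies in both balls, and its cardinality is that of either ball up to a factor
      tending to 1.\<close>
    define W where "W = zball y (R - a)"
    have "0 \<le> a"
      using near[rule_format, of undefined] by (meson abs_ge_zero order_trans)
    then have Wx: "W \<subseteq> zball x R" and Wy: "W \<subseteq> zball y R"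
      using zball_subset_zball[of y y a R] zball_subset_zball[OF near] by (auto simp: W_def)
    have "W \<noteq> {}"
      using R0[OF \<open>R \<ge> R0\<close>] card_zball_pos[of "R - a" y] \<open>0 \<le> a\<close> by (auto simp: W_def)
    have ratio: "real (card (zball z R)) / real (card W) - 1 < \<epsilon>/2" for z :: "real ^ 'n"
    proof -
      have "real (card (zball z R)) / real (card W) \<le> ((2*R + 1) / (2*(R - a) - 1)) ^ CARD('n)"
        unfolding W_def using R0[OF \<open>R \<ge> R0\<close>] \<open>0 \<le> a\<close>
        by (intro card_zball_ratio_bounds(2)) auto
      then show ?thesis using R0[OF \<open>R \<ge> R0\<close>] by linarith
    qed
    show ?thesis
      using card_Int_ratio_subset_le[OF Wx finite_zball \<open>W \<noteq> {}\<close>, of A] ratio[of x]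
        card_Int_ratio_subset_le[OF Wy finite_zball \<open>W \<noteq> {}\<close>, of A] ratio[of y]
      unfolding freq_def by linarith
  qed
  then show ?thesis by blast
qed

section \<open>Almost periodic sets\<close>

(* The almost periodicity part of almost_periodic_pattern with D_R^+ unfolded and without
   the Delone condition; in this form it passes to the sets \<Gamma> \<inter> (\<Gamma> - w) behind rho. *)
definition almost_periodic_set :: "(int ^ 'n) set \<Rightarrow> bool" where
  "almost_periodic_set A \<longleftrightarrow> (\<forall>\<epsilon>>0. \<exists>R0 N. relatively_dense N \<and>
     (\<forall>R\<ge>R0. \<forall>v\<in>N. \<forall>x. freq (sym_diff (translate A v) A) x R \<le> \<epsilon>))"

lemma almost_periodic_pattern_imp_almost_periodic_set:
  assumes "almost_periodic_pattern \<Gamma>"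
  shows "almost_periodic_set \<Gamma>"
  unfolding almost_periodic_set_def
proof (intro allI impI)
  fix \<epsilon> :: real assume "\<epsilon> > 0"
  then obtain R0 N where "relatively_dense N"
    and "\<forall>R\<ge>R0. \<forall>v\<in>N. Dplus R (sym_diff (translate \<Gamma> v) \<Gamma>) < \<epsilon>"
    using assms unfolding almost_periodic_pattern_def by blast
  then show "\<exists>R0 N. relatively_dense N \<and>
      (\<forall>R\<ge>R0. \<forall>v\<in>N. \<forall>x. freq (sym_diff (translate \<Gamma> v) \<Gamma>) x R \<le> \<epsilon>)"
    by (meson freq_le_Dplus order.trans less_imp_le)
qed

lemma almost_periodic_set_Int_translate:
  assumes "almost_periodic_set A"
  shows "almost_periodic_set (A \<inter> translate A w)"
  unfolding almost_periodic_set_def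
proof (intro allI impI)
  fix \<epsilon> :: real assume "\<epsilon> > 0"
  then obtain R0 N where N: "relatively_dense N"
    and small: "\<And>R v x. R \<ge> R0 \<Longrightarrow> v \<in> N \<Longrightarrow> freq (sym_diff (translate A v) A) x R \<le> \<epsilon>/2"
    using assms unfolding almost_periodic_set_def by (meson half_gt_zero)
  have "freq (sym_diff (translate (A \<inter> translate A w) v) (A \<inter> translate A w)) x R \<le> \<epsilon>"
    if "R \<ge> R0" "v \<in> N" for R v x
  proof -
    define E where "E = sym_diff (translate A v) A"
    have "sym_diff (translate (A \<inter> translate A w) v) (A \<inter> translate A w) \<subseteq> E \<union> translate E w"
      by (auto simp: E_def mem_translate algebra_simps)
    then have "freq (sym_diff (translate (A \<inter> translate A w) v) (A \<inter> translate A w)) x R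
        \<le> freq E x R + freq (translate E w) x R"
      by (rule order.trans[OF freq_mono freq_Un_le])
    also have "freq (translate E w) x R = freq E (x - of_int_vec w) R"
      using freq_translate[of E w "x - of_int_vec w" R] by simp
    finally show ?thesis
      using small[OF that, of x] small[OF that, of "x - of_int_vec w"] by (simp add: E_def)
  qed
  with N show "\<exists>R0 N. relatively_dense N \<and> (\<forall>R\<ge>R0. \<forall>v\<in>N. \<forall>x.
      freq (sym_diff (translate (A \<inter> translate A w) v) (A \<inter> translate A w)) x R \<le> \<epsilon>)"
    by blast
qed

lemma almost_periodic_set_freq_oscillation:
  assumes "almost_periodic_set A" "\<epsilon> > 0"
  shows "\<exists>R0. \<forall>R\<ge>R0. \<forall>x y :: real ^ 'n. \<bar>freq A x R - freq A y R\<bar> < \<epsilon>"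
proof -
  obtain R1 N where "relatively_dense N"
    and small: "\<And>R v x. R \<ge> R1 \<Longrightarrow> v \<in> N \<Longrightarrow> freq (sym_diff (translate A v) A) x R \<le> \<epsilon>/2"
    using assms unfolding almost_periodic_set_def by (meson half_gt_zero)
  then obtain r where r: "\<And>x :: real ^ 'n. zball x r \<inter> N \<noteq> {}"
    unfolding relatively_dense_def by (meson order_refl)
  obtain R2 where near: "\<forall>R\<ge>R2. \<forall>x y :: real ^ 'n. (\<forall>i. \<bar>x $ i - y $ i\<bar> \<le> r) \<longrightarrow>
      \<bar>freq A x R - freq A y R\<bar> < \<epsilon>/2"
    using freq_near_centers[where A=A and a=r and \<epsilon>="\<epsilon>/2"] assms(2) by (meson half_gt_zero)
  have "\<bar>freq A x R - freq A y R\<bar> < \<epsilon>" if "R \<ge> max R1 R2" for R and x y :: "real ^ 'n"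
  proof -
    \<comment> \<open>An almost period \<open>v\<close> moves \<open>x\<close> to within \<open>r\<close> of \<open>y\<close>.\<close>
    obtain v where "v \<in> zball (y - x) r" "v \<in> N"
      using r[of "y - x"] by blast
    then have "\<forall>i. \<bar>(x + of_int_vec v) $ i - y $ i\<bar> \<le> r"
      by (auto simp: mem_zball abs_minus_commute algebra_simps less_imp_le)
    then have "\<bar>freq A (x + of_int_vec v) R - freq A y R\<bar> < \<epsilon>/2"
      using near that by simp
    moreover have "\<bar>freq A (x + of_int_vec v) R - freq A x R\<bar> \<le> \<epsilon>/2"
      using freq_diff_le_freq_sym_diff[of "translate A v" "x + of_int_vec v" R A]
        small[of R v "x + of_int_vec v"] \<open>v \<in> N\<close> that
      by (simp add: freq_translate abs_minus_commute)
    ultimately show ?thesis by linarith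
  qed
  then show ?thesis by blast
qed

section \<open>Convergence of frequencies to the density\<close>

lemma sum_card_filter_swap:
  assumes "finite P" "finite Q"
  shows "(\<Sum>p\<in>P. card {q\<in>Q. r p q}) = (\<Sum>q\<in>Q. card {p\<in>P. r p q})"
proof -
  have card_eq: "card {x\<in>X. s x} = (\<Sum>x\<in>X. if s x then 1 else 0)" if "finite X"
    for X :: "'c set" and s
    using that by (simp add: sum.inter_filter[symmetric])
  show ?thesis using assms by (simp add: card_eq sum.swap[of _ P Q])
qed

lemma sum_card_Int_zball_eq:
  "(\<Sum>y\<in>zball 0 S. card (A \<inter> zball (of_int_vec y) R))
     = (\<Sum>a\<in>A \<inter> zball (0 :: real ^ 'n) (S + R). card (zball 0 S \<inter> zball (of_int_vec a) R))"
proof -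
  have "A \<inter> zball (of_int_vec y) R = {a \<in> A \<inter> zball 0 (S + R). y \<in> zball (of_int_vec a) R}"
    if "y \<in> zball (0 :: real ^ 'n) S" for y
  proof -
    have "a \<in> zball 0 (S + R)" if "a \<in> zball (of_int_vec y) R" for a
    proof -
      have ya: "\<bar>of_int (y $ i)\<bar> < S" "\<bar>of_int (y $ i) - of_int (a $ i)\<bar> < R" for i
        using \<open>y \<in> zball 0 S\<close> that by (simp_all add: mem_zball)
      have "\<bar>of_int (a $ i)\<bar> < S + R" for i
        using ya[of i] unfolding abs_less_iff by linarith
      then show ?thesis by (simp add: mem_zball)
    qed
    then show ?thesis using mem_zball_commute by blast
  qed
  then have "(\<Sum>y\<in>zball 0 S. card (A \<inter> zball (of_int_vec y) R))
      = (\<Sum>y\<in>zball (0 :: real ^ 'n) S. card {a \<in> A \<inter> zball 0 (S + R). y \<in> zball (of_int_vec a) R})"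
    by (intro sum.cong) simp_all
  also have "\<dots> = (\<Sum>a\<in>A \<inter> zball 0 (S + R). card {y \<in> zball 0 S. y \<in> zball (of_int_vec a) R})"
    by (rule sum_card_filter_swap) auto
  finally show ?thesis
    by (simp add: Int_def)
qed

lemma sum_card_Int_zball_bounds:
  fixes A :: "(int ^ 'n) set"
  shows "(\<Sum>y\<in>zball 0 S. card (A \<inter> zball (of_int_vec y) R))
           \<le> card (zball (0 :: real ^ 'n) R) * card (A \<inter> zball 0 (S + R))"
    and "R \<ge> 0 \<Longrightarrow> card (zball (0 :: real ^ 'n) R) * card (A \<inter> zball 0 (S - R))
           \<le> (\<Sum>y\<in>zball 0 S. card (A \<inter> zball (of_int_vec y) R))"
proof -
  have card_ball: "card (zball (of_int_vec a) R) = card (zball (0 :: real ^ 'n) R)"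
    for a :: "int ^ 'n"
    using card_zball_translate[of 0 a R] by simp
  show "(\<Sum>y\<in>zball 0 S. card (A \<inter> zball (of_int_vec y) R))
      \<le> card (zball (0 :: real ^ 'n) R) * card (A \<inter> zball 0 (S + R))"
  proof -
    have "card (zball 0 S \<inter> zball (of_int_vec a) R) \<le> card (zball (0 :: real ^ 'n) R)"
      for a :: "int ^ 'n"
      using card_mono[OF finite_zball inf_le2, of "zball 0 S" "of_int_vec a" R] card_ball[of a]
      by simp
    then show ?thesis
      unfolding sum_card_Int_zball_eq
      using sum_bounded_above[of "A \<inter> zball 0 (S + R)" _ "card (zball (0 :: real ^ 'n) R)"]
      by (simp add: mult.commute)
  qed
  assume "R \<ge> 0"
  have "zball (of_int_vec a) R \<subseteq> zball (0 :: real ^ 'n) S" if "a \<in> zball 0 (S - R)" for a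
  proof -
    have "\<forall>i. \<bar>(0 :: real ^ 'n) $ i - of_int_vec a $ i\<bar> \<le> S - R"
      using that by (simp add: mem_zball less_imp_le)
    from zball_subset_zball[OF this, of S] show ?thesis by simp
  qed
  then have "card (zball (0 :: real ^ 'n) R) * card (A \<inter> zball 0 (S - R))
      = (\<Sum>a\<in>A \<inter> zball 0 (S - R). card (zball 0 S \<inter> zball (of_int_vec a) R))"
    by (simp add: card_ball Int_absorb1)
  also have "\<dots> \<le> (\<Sum>a\<in>A \<inter> zball 0 (S + R). card (zball 0 S \<inter> zball (of_int_vec a) R))"
    using \<open>R \<ge> 0\<close> zball_mono[of "S - R" "S + R"] by (intro sum_mono2) auto
  finally show "card (zball (0 :: real ^ 'n) R) * card (A \<inter> zball 0 (S - R))
      \<le> (\<Sum>y\<in>zball 0 S. card (A \<inter> zball (of_int_vec y) R))"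
    unfolding sum_card_Int_zball_eq .
qed

lemma card_Int_zball_bounds_if_freq_near:
  fixes A :: "(int ^ 'n) set" and p \<epsilon> :: real
  assumes "R > 1/2" and near: "\<And>y. \<bar>freq A (of_int_vec y) R - p\<bar> \<le> \<epsilon>"
  shows "(p - \<epsilon>) * card (zball (0 :: real ^ 'n) (T - R)) \<le> card (A \<inter> zball (0 :: real ^ 'n) T)"
    and "card (A \<inter> zball (0 :: real ^ 'n) T) \<le> (p + \<epsilon>) * card (zball (0 :: real ^ 'n) (T + R))"
proof -
  define c where "c = real (card (zball (0 :: real ^ 'n) R))"
  have "c > 0"
    using card_zball_pos[OF assms(1)] by (simp add: c_def)
  have freq_eq: "freq A (of_int_vec y) R = card (A \<inter> zball (of_int_vec y) R) / c" for y
    using card_zball_translate[of 0 y R] by (simp add: freq_def c_def)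
  have "p - \<epsilon> \<le> card (A \<inter> zball (of_int_vec y) R) / c"
    and "card (A \<inter> zball (of_int_vec y) R) / c \<le> p + \<epsilon>" for y
    using near[of y] unfolding freq_eq abs_le_iff by linarith+
  then have lower: "(p - \<epsilon>) * c \<le> card (A \<inter> zball (of_int_vec y) R)"
    and upper: "card (A \<inter> zball (of_int_vec y) R) \<le> (p + \<epsilon>) * c" for y
    using \<open>c > 0\<close> by (simp_all add: pos_le_divide_eq pos_divide_le_eq)
  have sum_bounds:
    "card (zball (0 :: real ^ 'n) S) * ((p - \<epsilon>) * c)
       \<le> (\<Sum>y\<in>zball 0 S. real (card (A \<inter> zball (of_int_vec y) R)))"
    "(\<Sum>y\<in>zball 0 S. real (card (A \<inter> zball (of_int_vec y) R)))
       \<le> card (zball (0 :: real ^ 'n) S) * ((p + \<epsilon>) * c)"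
    for S
    by (rule sum_bounded_below, rule lower) (rule sum_bounded_above, rule upper)
  have "c * ((p - \<epsilon>) * card (zball (0 :: real ^ 'n) (T - R)))
      \<le> (\<Sum>y\<in>zball 0 (T - R). real (card (A \<inter> zball (of_int_vec y) R)))"
    using sum_bounds(1)[of "T - R"] by (simp add: mult_ac)
  also have "\<dots> \<le> c * card (A \<inter> zball 0 T)"
    using of_nat_mono[OF sum_card_Int_zball_bounds(1)[where A=A and S="T - R" and R=R]]
    by (simp add: c_def)
  finally show "(p - \<epsilon>) * card (zball (0 :: real ^ 'n) (T - R))
      \<le> card (A \<inter> zball (0 :: real ^ 'n) T)"
    using \<open>c > 0\<close> by simp
  have "c * card (A \<inter> zball (0 :: real ^ 'n) T)
      \<le> (\<Sum>y\<in>zball 0 (T + R). real (card (A \<inter> zball (of_int_vec y) R)))"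
    using of_nat_mono[OF sum_card_Int_zball_bounds(2)[where A=A and S="T + R" and R=R]] assms(1)
    by (simp add: c_def)
  also have "\<dots> \<le> c * ((p + \<epsilon>) * card (zball (0 :: real ^ 'n) (T + R)))"
    using sum_bounds(2)[of "T + R"] by (simp add: mult_ac)
  finally show "card (A \<inter> zball (0 :: real ^ 'n) T)
      \<le> (p + \<epsilon>) * card (zball (0 :: real ^ 'n) (T + R))"
    using \<open>c > 0\<close> by simp
qed

lemma freq_eventually_near:
  fixes A :: "(int ^ 'n) set"
  assumes "R > 1/2" "\<epsilon> > 0" and near: "\<And>y. \<bar>freq A (of_int_vec y) R - p\<bar> \<le> \<epsilon>"
  shows "\<forall>\<^sub>F T in at_top. \<bar>freq A 0 T - p\<bar> < 2 * \<epsilon>"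
proof -
  define ratio where
    "ratio c T = real (card (zball (0 :: real ^ 'n) (T + c))) / card (zball (0 :: real ^ 'n) T)"
    for c T
  have "((\<lambda>T. (p + \<epsilon>) * ratio R T) \<longlongrightarrow> (p + \<epsilon>) * 1) at_top"
    and "((\<lambda>T. (p - \<epsilon>) * ratio (- R) T) \<longlongrightarrow> (p - \<epsilon>) * 1) at_top"
    unfolding ratio_def by (intro tendsto_mult tendsto_const tendsto_card_zball_ratio)+
  then have "\<forall>\<^sub>F T in at_top. (p + \<epsilon>) * ratio R T < p + 2 * \<epsilon>"
    and "\<forall>\<^sub>F T in at_top. p - 2 * \<epsilon> < (p - \<epsilon>) * ratio (- R) T"
    using \<open>\<epsilon> > 0\<close> by (auto elim!: order_tendstoD)
  moreover have "\<forall>\<^sub>F T in at_top. T > (1/2 :: real)"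
    by (rule eventually_gt_at_top)
  ultimately show ?thesis
  proof eventually_elim
    case (elim T)
    have "0 < real (card (zball (0 :: real ^ 'n) T))"
      using card_zball_pos[OF elim(3)] by simp
    moreover note card_Int_zball_bounds_if_freq_near[OF \<open>R > 1/2\<close> near, of T]
    ultimately have "(p - \<epsilon>) * ratio (- R) T \<le> freq A 0 T" "freq A 0 T \<le> (p + \<epsilon>) * ratio R T"
      unfolding ratio_def freq_def by (simp_all add: divide_right_mono)
    with elim show ?case by linarith
  qed
qed

lemma convergent_if_eventually_near:
  fixes f :: "'a \<Rightarrow> 'b :: complete_space"
  assumes "\<And>e. e > 0 \<Longrightarrow> \<exists>a. \<forall>\<^sub>F x in F. dist (f x) (f a) < e"
  shows "\<exists>L. (f \<longlongrightarrow> L) F"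
proof -
  have "cauchy_filter (filtermap f F)"
    unfolding cauchy_filter_metric_filtermap
  proof (intro allI impI)
    fix e :: real assume "e > 0"
    then obtain a where "\<forall>\<^sub>F x in F. dist (f x) (f a) < e/2"
      using assms[of "e/2"] by auto
    then show "\<exists>P. eventually P F \<and> (\<forall>x y. P x \<and> P y \<longrightarrow> dist (f x) (f y) < e)"
      by (intro exI[of _ "\<lambda>x. dist (f x) (f a) < e/2"]) (auto intro: dist_triangle_half_l)
  qed
  then show ?thesis
    unfolding filterlim_def by (metis cauchy_filter_convergent convergent_filter_iff)
qed

lemma almost_periodic_set_freq_tendsto_density:
  fixes A :: "(int ^ 'n) set"
  assumes "almost_periodic_set A"
  shows "(freq A 0 \<longlongrightarrow> density A) at_top"
proof -
  have "\<exists>R. \<forall>\<^sub>F T in at_top. dist (freq A 0 T) (freq A 0 R) < e" if "e > 0" for e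
  proof -
    obtain R0 where osc: "\<forall>R\<ge>R0. \<forall>x y :: real ^ 'n. \<bar>freq A x R - freq A y R\<bar> < e/2"
      using almost_periodic_set_freq_oscillation[OF assms, of "e/2"] \<open>e > 0\<close> by auto
    have "\<forall>\<^sub>F T in at_top. \<bar>freq A 0 T - freq A 0 (max R0 1)\<bar> < 2 * (e/2)"
      by (rule freq_eventually_near[where R="max R0 1"])
        (use osc \<open>e > 0\<close> in \<open>auto intro: less_imp_le\<close>)
    then show ?thesis
      by (auto simp: dist_real_def)
  qed
  then obtain L where "(freq A 0 \<longlongrightarrow> L) at_top"
    using convergent_if_eventually_near by blast
  moreover from this have "density A = L"
    unfolding density_eq_Lim_freq by (simp add: tendsto_Lim)
  ultimately show ?thesis by simp
qed

lemma almost_periodic_set_freq_uniformly_near_density: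
  fixes A :: "(int ^ 'n) set"
  assumes "almost_periodic_set A" "\<epsilon> > 0"
  shows "\<exists>R0. \<forall>R\<ge>R0. \<forall>x :: real ^ 'n. \<bar>freq A x R - density A\<bar> < \<epsilon>"
proof -
  obtain R0 where osc: "\<forall>R\<ge>R0. \<forall>x y :: real ^ 'n. \<bar>freq A x R - freq A y R\<bar> < \<epsilon>/3"
    using almost_periodic_set_freq_oscillation[OF assms(1), of "\<epsilon>/3"] assms(2) by auto
  have "\<bar>freq A x R - density A\<bar> < \<epsilon>" if "R \<ge> max R0 1" for R and x :: "real ^ 'n"
  proof -
    have ev: "\<forall>\<^sub>F T in at_top. \<bar>freq A 0 T - freq A 0 R\<bar> < 2 * (\<epsilon>/3)"
      by (rule freq_eventually_near[where R=R]) (use osc that assms(2) in \<open>auto intro: less_imp_le\<close>)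
    have "((\<lambda>T. \<bar>freq A 0 T - freq A 0 R\<bar>) \<longlongrightarrow> \<bar>density A - freq A 0 R\<bar>) at_top"
      by (intro tendsto_intros almost_periodic_set_freq_tendsto_density assms(1))
    then have "\<bar>density A - freq A 0 R\<bar> \<le> 2 * (\<epsilon>/3)"
      by (rule tendsto_upperbound) (use ev in \<open>auto elim: eventually_mono\<close>)
    moreover have "\<bar>freq A x R - freq A 0 R\<bar> < \<epsilon>/3"
      using osc that by auto
    ultimately show ?thesis
      unfolding abs_less_iff abs_le_iff by linarith
  qed
  then show ?thesis by blast
qed

section \<open>The mean of rho\<close>

(* Both sides count the pairs (v, y) \<in> [B(x,R)] \<times> (\<Gamma> \<inter> [B_S]) with y + v \<in> \<Gamma>. *)
lemma sum_card_Int_translate_zball: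
  fixes \<Gamma> :: "(int ^ 'n) set"
  shows "(\<Sum>v\<in>zball x R. card (\<Gamma> \<inter> translate \<Gamma> (- v) \<inter> zball (0 :: real ^ 'n) S))
       = (\<Sum>y\<in>\<Gamma> \<inter> zball 0 S. card (\<Gamma> \<inter> zball (x + of_int_vec y) R))"
proof -
  have left: "\<Gamma> \<inter> translate \<Gamma> (- v) \<inter> zball 0 S = {y \<in> \<Gamma> \<inter> zball 0 S. y + v \<in> \<Gamma>}" for v
    by (auto simp: mem_translate)
  have right: "card (\<Gamma> \<inter> zball (x + of_int_vec y) R) = card {v \<in> zball x R. y + v \<in> \<Gamma>}" for y
  proof -
    have "\<Gamma> \<inter> zball (x + of_int_vec y) R = (\<lambda>v. v + y) ` {v \<in> zball x R. y + v \<in> \<Gamma>}"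
      unfolding zball_translate[symmetric] by (auto simp: add.commute)
    then show ?thesis by (simp add: card_image)
  qed
  have "(\<Sum>v\<in>zball x R. card {y \<in> \<Gamma> \<inter> zball (0 :: real ^ 'n) S. y + v \<in> \<Gamma>})
      = (\<Sum>y\<in>\<Gamma> \<inter> zball 0 S. card {v \<in> zball x R. y + v \<in> \<Gamma>})"
    by (rule sum_card_filter_swap) auto
  then show ?thesis
    by (simp only: left right)
qed

lemma sum_freq_Int_translate_near:
  fixes \<Gamma> :: "(int ^ 'n) set" and d e :: real
  assumes near: "\<And>y. \<bar>freq \<Gamma> (x + of_int_vec y) R - d\<bar> \<le> e"
  shows "\<bar>(\<Sum>v\<in>zball x R. freq (\<Gamma> \<inter> translate \<Gamma> (- v)) 0 S) - card (zball x R) * d * freq \<Gamma> 0 S\<bar>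
           \<le> e * card (zball x R) * freq \<Gamma> 0 S"
proof -
  define c h where "c = real (card (zball x R))"
    and "h = (\<Sum>v\<in>zball x R. freq (\<Gamma> \<inter> translate \<Gamma> (- v)) 0 S)"
  define B where "B = zball (0 :: real ^ 'n) S"
  have summand: "\<bar>real (card (\<Gamma> \<inter> zball (x + of_int_vec y) R)) - c * d\<bar> \<le> e * c" for y
  proof -
    have "real (card (\<Gamma> \<inter> zball (x + of_int_vec y) R)) = c * freq \<Gamma> (x + of_int_vec y) R"
      by (simp add: card_Int_zball_eq_freq c_def card_zball_translate)
    moreover have "\<bar>c * freq \<Gamma> (x + of_int_vec y) R - c * d\<bar> \<le> c * e"
      unfolding right_diff_distrib[symmetric] abs_mult using near[of y]
      by (simp add: c_def mult_left_mono)
    ultimately show ?thesis by (simp add: mult.commute)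
  qed
  have "h * card B = (\<Sum>y\<in>\<Gamma> \<inter> B. real (card (\<Gamma> \<inter> zball (x + of_int_vec y) R)))"
    unfolding h_def B_def sum_distrib_right card_Int_zball_eq_freq[symmetric]
    by (simp add: sum_card_Int_translate_zball flip: of_nat_sum)
  then have "\<bar>h * card B - c * d * card (\<Gamma> \<inter> B)\<bar>
      = \<bar>\<Sum>y\<in>\<Gamma> \<inter> B. real (card (\<Gamma> \<inter> zball (x + of_int_vec y) R)) - c * d\<bar>"
    by (simp add: sum_subtractf mult.commute)
  also have "\<dots> \<le> (\<Sum>y\<in>\<Gamma> \<inter> B. \<bar>real (card (\<Gamma> \<inter> zball (x + of_int_vec y) R)) - c * d\<bar>)"
    by (rule sum_abs)
  also have "\<dots> \<le> card (\<Gamma> \<inter> B) * (e * c)"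
    by (rule sum_bounded_above) (rule summand)
  finally have "\<bar>(h - c * d * freq \<Gamma> 0 S) * card B\<bar> \<le> (e * c * freq \<Gamma> 0 S) * card B"
    unfolding B_def card_Int_zball_eq_freq by (simp add: algebra_simps)
  moreover have "h = 0 \<and> freq \<Gamma> 0 S = 0" if "card B = 0"
    using that by (simp add: h_def B_def freq_def)
  ultimately show ?thesis
    unfolding h_def[symmetric] c_def[symmetric] by (cases "card B = 0") (simp_all add: abs_mult)
qed

lemma sum_density_Int_translate_near:
  fixes \<Gamma> :: "(int ^ 'n) set" and e :: real
  assumes "almost_periodic_set \<Gamma>" and near: "\<And>y. \<bar>freq \<Gamma> (x + of_int_vec y) R - density \<Gamma>\<bar> \<le> e"
  shows "\<bar>(\<Sum>v\<in>zball x R. density (\<Gamma> \<inter> translate \<Gamma> (- v))) - card (zball x R) * density \<Gamma> ^ 2\<bar>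
           \<le> e * card (zball x R) * density \<Gamma>"
proof -
  define D c where "D = density \<Gamma>" and "c = real (card (zball x R))"
  define h where "h S = (\<Sum>v\<in>zball x R. freq (\<Gamma> \<inter> translate \<Gamma> (- v)) 0 S)" for S
  have lim_freq: "(freq \<Gamma> 0 \<longlongrightarrow> D) at_top"
    unfolding D_def using assms(1) by (rule almost_periodic_set_freq_tendsto_density)
  have "(h \<longlongrightarrow> (\<Sum>v\<in>zball x R. density (\<Gamma> \<inter> translate \<Gamma> (- v)))) at_top"
    unfolding h_def using assms(1)
    by (intro tendsto_sum almost_periodic_set_freq_tendsto_density
        almost_periodic_set_Int_translate)
  then have "((\<lambda>S. \<bar>h S - c * D * freq \<Gamma> 0 S\<bar>)
      \<longlongrightarrow> \<bar>(\<Sum>v\<in>zball x R. density (\<Gamma> \<inter> translate \<Gamma> (- v))) - c * D * D\<bar>) at_top"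
    by (intro tendsto_intros lim_freq)
  moreover have "((\<lambda>S. e * c * freq \<Gamma> 0 S) \<longlongrightarrow> e * c * D) at_top"
    by (intro tendsto_intros lim_freq)
  moreover have "\<bar>h S - c * D * freq \<Gamma> 0 S\<bar> \<le> e * c * freq \<Gamma> 0 S" for S
    unfolding h_def c_def D_def using near by (rule sum_freq_Int_translate_near)
  ultimately have "\<bar>(\<Sum>v\<in>zball x R. density (\<Gamma> \<inter> translate \<Gamma> (- v))) - c * D * D\<bar> \<le> e * c * D"
    by (auto intro: tendsto_le[OF trivial_limit_at_top_linorder] always_eventually)
  then show ?thesis
    by (simp add: c_def D_def power2_eq_square mult.assoc)
qed

lemma mean_rho_near_density:
  fixes \<Gamma> :: "(int ^ 'n) set" and e :: real
  assumes "almost_periodic_set \<Gamma>" "zball x R \<noteq> {}"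
    and near: "\<And>y. \<bar>freq \<Gamma> (x + of_int_vec y) R - density \<Gamma>\<bar> \<le> e"
  shows "\<bar>density \<Gamma> - (1 / card (zball x R)) * (\<Sum>v\<in>zball x R. rho \<Gamma> v)\<bar> \<le> e"
proof -
  define D c S where "D = density \<Gamma>" and "c = real (card (zball x R))"
    and "S = (\<Sum>v\<in>zball x R. density (\<Gamma> \<inter> translate \<Gamma> (- v)))"
  have "c > 0"
    using assms(2) by (simp add: c_def card_gt_0_iff)
  have "D \<ge> 0"
    unfolding D_def using almost_periodic_set_freq_tendsto_density[OF assms(1)]
    by (rule tendsto_lowerbound) (simp_all add: freq_nonneg)
  \<comment> \<open>For \<open>D = 0\<close> both sides vanish, since \<open>rho \<Gamma>\<close> divides by \<open>D\<close>.\<close>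
  have mean: "(1 / c) * (\<Sum>v\<in>zball x R. rho \<Gamma> v) = S / (c * D)"
    unfolding rho_def S_def D_def sum_divide_distrib[symmetric] by simp
  have "\<bar>S - c * D ^ 2\<bar> \<le> e * c * D"
    unfolding S_def c_def D_def by (rule sum_density_Int_translate_near[OF assms(1) near])
  moreover have "0 \<le> e"
    using near[of 0] by linarith
  ultimately show ?thesis
    unfolding mean D_def[symmetric] c_def[symmetric] using \<open>c > 0\<close> \<open>D \<ge> 0\<close>
    by (cases "D = 0") (simp_all add: abs_le_iff field_simps power2_eq_square)
qed

theorem proposition2p8:
  fixes \<Gamma> :: "(int ^ 'n) set"
  assumes "almost_periodic_pattern \<Gamma>"
  shows "\<forall>\<epsilon>>0. \<exists>R0>0. \<forall>R\<ge>R0. \<forall>x :: real ^ 'n.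
           \<bar>density \<Gamma> - (1 / real (card (zball x R))) * (\<Sum>v\<in>zball x R. rho \<Gamma> v)\<bar> < \<epsilon>"
proof (intro allI impI)
  fix \<epsilon> :: real assume "\<epsilon> > 0"
  have ap: "almost_periodic_set \<Gamma>"
    using assms by (rule almost_periodic_pattern_imp_almost_periodic_set)
  then obtain R1 where R1: "\<forall>R\<ge>R1. \<forall>x :: real ^ 'n. \<bar>freq \<Gamma> x R - density \<Gamma>\<bar> < \<epsilon>/2"
    using almost_periodic_set_freq_uniformly_near_density \<open>\<epsilon> > 0\<close> half_gt_zero by blast
  show "\<exists>R0>0. \<forall>R\<ge>R0. \<forall>x :: real ^ 'n.
      \<bar>density \<Gamma> - (1 / real (card (zball x R))) * (\<Sum>v\<in>zball x R. rho \<Gamma> v)\<bar> < \<epsilon>"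
  proof (intro exI[of _ "max R1 1"] conjI allI impI)
    fix R and x :: "real ^ 'n" assume "max R1 1 \<le> R"
    then have "\<bar>density \<Gamma> - (1 / real (card (zball x R))) * (\<Sum>v\<in>zball x R. rho \<Gamma> v)\<bar> \<le> \<epsilon>/2"
      using card_zball_pos[of R x] R1
      by (intro mean_rho_near_density[OF ap]) (auto intro: less_imp_le)
    with \<open>\<epsilon> > 0\<close> show "\<bar>density \<Gamma> - (1 / real (card (zball x R))) * (\<Sum>v\<in>zball x R. rho \<Gamma> v)\<bar> < \<epsilon>"
      by linarith
  qed simp
qed

end
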